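(* Let $X$, $Y$ be real Banach spaces, $\Omega$ a measure space, $Z:=L^2(\Omega)$, and $e:Y\to Z$ a linear continuous dense embedding. Let $f:X\to\mathbb{R}$ and $g:X\to Y$ be continuously Fréchet differentiable. Let $x\in X$ be a feasible point ($g(x)\le 0$) satisfying the AKKT conditions, with sequences $x^k\to x$ in $X$ and $(\lambda^k)\subset K_Y^+$ such that $f'(x^k)+g'(x^k)^*\lambda^k\to 0$ and $\langle\lambda^k,g_-(x^k)\rangle\to 0$. Then: (a) if the Zowe–Kurcyusz condition $g'(x)X+\operatorname{cone}(K_Y+g(x))=Y$ holds at $x$, then $(\lambda^k)$ is bounded in $Y^*$; (b) if moreover the map $y\mapsto|y|$ is well-defined and continuous on $Y$, the closed unit ball of $Y^*$ is weak-$*$ sequentially compact, and $(\lambda^k)$ is bounded in $Y^*$, then $x$ is a KKT point, i.e. there exists $\lambda\in K_Y^+$ with $f'(x)+g'(x)^*\lambda=0$, $g(x)\le 0$ and $\langle\lambda,g(x)\rangle=0$.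
   Context: The order on $Y$ is induced by $Z$: $K_Y:=\{y\in Y: e(y)\ge 0 \text{ a.e.}\}$, and $y\le 0$ means $-y\in K_Y$. $K_Y^+:=\{\mu\in Y^*:\langle\mu,y\rangle\ge 0\ \forall y\in K_Y\}$, with $\langle\cdot,\cdot\rangle$ the duality pairing of $Y^*$ and $Y$. For $y\in Y$, $|y|$, $y_+=\max\{y,0\}$, $y_-=\max\{-y,0\}$ are defined via the pointwise operations in $Z$ (the statement "well-defined on $Y$" means these land in $Y$); $g_-(x):=(g(x))_-$. $\operatorname{cone}(A)$ denotes the conical hull $\{t a: t\ge 0, a\in A\}$ of $A\subseteq Y$. *)

theory Defs
  imports "HOL-Analysis.Analysis"
begin

text \<open>Z = L^2(M). Elements of Z are represented by real functions on the space of M,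
  compared almost everywhere. The embedding e : Y -> Z is given on representatives.\<close>

definition L2_dense_embedding :: "'w measure \<Rightarrow> ('y::banach \<Rightarrow> 'w \<Rightarrow> real) \<Rightarrow> bool" where
  "L2_dense_embedding M e \<longleftrightarrow>
     (\<forall>y. e y \<in> borel_measurable M \<and> integrable M (\<lambda>w. (e y w)^2)) \<and>
     (\<forall>a b y z. AE w in M. e (a *\<^sub>R y + b *\<^sub>R z) w = a * e y w + b * e z w) \<and>
     (\<exists>C. \<forall>y. (\<integral>w. (e y w)^2 \<partial>M) \<le> C * (norm y)^2) \<and>
     (\<forall>y. (AE w in M. e y w = 0) \<longrightarrow> y = 0) \<and>
     (\<forall>h \<in> borel_measurable M. integrable M (\<lambda>w. (h w)^2) \<longrightarrow>
        (\<forall>\<epsilon>>0. \<exists>y. (\<integral>w. (e y w - h w)^2 \<partial>M) < \<epsilon>))"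

definition KY :: "'w measure \<Rightarrow> ('y \<Rightarrow> 'w \<Rightarrow> real) \<Rightarrow> 'y set" where
  "KY M e = {y. AE w in M. e y w \<ge> 0}"

definition Yle0 :: "'w measure \<Rightarrow> ('y::real_vector \<Rightarrow> 'w \<Rightarrow> real) \<Rightarrow> 'y \<Rightarrow> bool" where
  "Yle0 M e y \<longleftrightarrow> - y \<in> KY M e"

definition KY_plus :: "'w measure \<Rightarrow> ('y::real_normed_vector \<Rightarrow> 'w \<Rightarrow> real) \<Rightarrow> ('y \<Rightarrow>\<^sub>L real) set" where
  "KY_plus M e = {\<mu>. \<forall>y \<in> KY M e. blinfun_apply \<mu> y \<ge> 0}"

definition conical_hull :: "'y::real_vector set \<Rightarrow> 'y set" where
  "conical_hull A = {t *\<^sub>R a | t a. t \<ge> 0 \<and> a \<in> A}"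

definition dual_ball_weakstar_seq_compact :: "('y::real_normed_vector \<Rightarrow>\<^sub>L real) itself \<Rightarrow> bool" where
  "dual_ball_weakstar_seq_compact _ \<longleftrightarrow>
     (\<forall>\<mu> :: nat \<Rightarrow> ('y \<Rightarrow>\<^sub>L real). (\<forall>n. norm (\<mu> n) \<le> 1) \<longrightarrow>
        (\<exists>r \<mu>0. strict_mono r \<and> norm \<mu>0 \<le> 1 \<and>
           (\<forall>y. (\<lambda>n. blinfun_apply (\<mu> (r n)) y) \<longlonglongrightarrow> blinfun_apply \<mu>0 y)))"

end

theory Submission
  imports Defs
begin

(*
  (a) Under the Zowe-Kurcyusz condition every y in Y splits as y = g'(x) d + t (z + g(x))
  with z in K_Y and t >= 0. The functionals lambda^k are nonnegative on K_Y, the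
  compositions lambda^k o g'(x^k) are bounded, and lambda^k(g(x^k)) >= -lambda^k(g_-(x^k))
  is bounded below; testing lambda^k on the splitting therefore gives
  lambda^k(y) >= -(|d| + t) (B + eps_k |lambda^k|) with eps_k -> 0. After division by
  B + eps_k |lambda^k| the functionals are pointwise bounded, hence uniformly bounded by
  Banach-Steinhaus, so |lambda^k| <= N (B + eps_k |lambda^k|), which forces
  |lambda^k| <= 2 N B for large k.

  (b) A weak-* limit mu of a subsequence is nonnegative on K_Y. Bounded weak-* convergent
  functionals converge along norm-convergent arguments, so the AKKT conditions pass to the
  limit: f'(x) + g'(x)^* mu = 0 and mu(g(x)) = lim lambda^k(g(x^k) + g_-(x^k)) >= 0, while
  feasibility gives mu(g(x)) <= 0.
*)

lemma Baire_closed_cover: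
  fixes S :: "nat \<Rightarrow> 'a::complete_space set"
  assumes "\<And>n. closed (S n)" and "(\<Union>n. S n) = UNIV"
  shows "\<exists>n. interior (S n) \<noteq> {}"
proof (rule ccontr)
  assume "\<nexists>n. interior (S n) \<noteq> {}"
  then have "euclidean interior_of \<Union>(range S) = {}"
    using assms(1) by (intro Baire_category_alt) (auto simp: completely_metrizable_space_euclidean)
  then show False using assms(2) by simp
qed

lemma uniform_boundedness:
  fixes F :: "'i \<Rightarrow> 'a::banach \<Rightarrow>\<^sub>L 'b::real_normed_vector"
  assumes pointwise_bounded: "\<And>y. bounded (range (\<lambda>j. F j y))"
  shows "bounded (range F)"
proof -
  define S where "S n = {y. \<forall>j. norm (F j y) \<le> real n}" for n :: nat
  have closed_S: "closed (S n)" for n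
  proof -
    have "S n = (\<Inter>j. {y. norm (F j y) \<le> real n})" by (auto simp: S_def)
    moreover have "closed {y. norm (F j y) \<le> real n}" for j
      by (intro closed_Collect_le continuous_intros)
    ultimately show ?thesis by auto
  qed
  have "(\<Union>n. S n) = UNIV"
  proof safe
    fix y
    obtain C where "\<And>j. norm (F j y) \<le> C"
      using pointwise_bounded[of y] by (auto simp: bounded_iff)
    then have "y \<in> S (nat \<lceil>C\<rceil>)"
      unfolding S_def using real_nat_ceiling_ge order_trans by blast
    then show "y \<in> (\<Union>n. S n)" by blast
  qed auto
  with closed_S have "\<exists>n. interior (S n) \<noteq> {}"
    by (rule Baire_closed_cover)
  then obtain n y0 \<epsilon> where "\<epsilon> > 0" and ball_S: "ball y0 \<epsilon> \<subseteq> S n"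
    by (meson all_not_in_conv open_contains_ball open_interior interior_subset subset_trans)
  have "norm (F j z) \<le> (4 * real n / \<epsilon>) * norm z" for j z
  proof (cases "z = 0")
    case False
    define c where "c = \<epsilon> / (2 * norm z)"
    have "c > 0" using False \<open>\<epsilon> > 0\<close> by (simp add: c_def)
    have "norm (c *\<^sub>R z) < \<epsilon>" using False \<open>\<epsilon> > 0\<close> by (simp add: c_def)
    then have "y0 + c *\<^sub>R z \<in> S n" "y0 \<in> S n"
      using ball_S \<open>\<epsilon> > 0\<close> by (auto simp: dist_norm subset_iff)
    then have "norm (F j (y0 + c *\<^sub>R z) - F j y0) \<le> 2 * real n"
      unfolding S_def by (smt (verit, best) mem_Collect_eq norm_triangle_ineq4)
    then have "c * norm (F j z) \<le> 2 * real n"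
      using \<open>c > 0\<close> by (simp add: blinfun.add_right blinfun.scaleR_right)
    then show ?thesis
      using False \<open>c > 0\<close> \<open>\<epsilon> > 0\<close> by (simp add: c_def field_simps)
  qed simp
  then have "norm (F j) \<le> 4 * real n / \<epsilon>" for j
    by (intro norm_blinfun_bound) (use \<open>\<epsilon> > 0\<close> in auto)
  then show ?thesis by (auto simp: bounded_iff)
qed

lemma bounded_range_blinfun_if_pointwise_bdd_below:
  fixes F :: "'i \<Rightarrow> 'a::banach \<Rightarrow>\<^sub>L real"
  assumes "\<And>y. bdd_below (range (\<lambda>j. F j y))"
  shows "bounded (range F)"
proof (rule uniform_boundedness)
  fix y
  obtain C1 C2 where "\<And>j. C1 \<le> F j y" "\<And>j. C2 \<le> F j (- y)"
    using assms by (meson bdd_below.E rangeI)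
  then have "\<bar>F j y\<bar> \<le> \<bar>C1\<bar> + \<bar>C2\<bar>" for j
    by (smt (verit) blinfun.minus_right)
  then show "bounded (range (\<lambda>j. F j y))" by (auto simp: bounded_iff)
qed

lemma Bseq_if_le_const_plus_vanishing_multiple:
  fixes a \<epsilon> :: "nat \<Rightarrow> real"
  assumes nonneg: "\<And>k. 0 \<le> a k"
    and le: "\<And>k. a k \<le> C + \<epsilon> k * a k"
    and vanishing: "\<epsilon> \<longlonglongrightarrow> 0"
  shows "Bseq a"
proof (rule Bseq_eventually_mono)
  have "\<forall>\<^sub>F k in sequentially. \<epsilon> k < 1/2"
    using order_tendstoD(2)[OF vanishing, of "1/2"] by simp
  then show "\<forall>\<^sub>F k in sequentially. norm (a k) \<le> norm (2 * C)"
  proof eventually_elim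
    case (elim k)
    then have "\<epsilon> k * a k \<le> (1/2) * a k"
      using nonneg[of k] by (intro mult_right_mono) auto
    then show ?case using le[of k] nonneg[of k] by simp
  qed
qed simp

lemma abs_blinfun_le:
  fixes \<mu> :: "'a::real_normed_vector \<Rightarrow>\<^sub>L real"
  shows "\<bar>\<mu> y\<bar> \<le> norm \<mu> * norm y"
  using norm_blinfun[of \<mu> y] by simp

lemma multiplier_lower_bound_on_cone_decomposition:
  fixes A Ak :: "'x::real_normed_vector \<Rightarrow>\<^sub>L 'y::real_normed_vector"
    and \<mu> :: "'y \<Rightarrow>\<^sub>L real"
  assumes "0 \<le> t" "0 \<le> \<mu> z" "norm (\<mu> o\<^sub>L Ak) \<le> B" "- B \<le> \<mu> ck"
  shows "- ((norm d + t) * (B + (norm (A - Ak) + norm (c - ck)) * norm \<mu>))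
           \<le> \<mu> (A d + t *\<^sub>R (z + c))"
proof -
  have "\<bar>(\<mu> o\<^sub>L Ak) d\<bar> \<le> B * norm d"
    using abs_blinfun_le[of "\<mu> o\<^sub>L Ak" d] mult_right_mono[OF assms(3) norm_ge_zero[of d]] by linarith
  moreover have "\<bar>\<mu> ((A - Ak) d)\<bar> \<le> norm \<mu> * (norm (A - Ak) * norm d)"
    using abs_blinfun_le[of \<mu> "(A - Ak) d"] mult_left_mono[OF norm_blinfun norm_ge_zero[of \<mu>]]
    by (meson order_trans)
  moreover have "- (t * (norm \<mu> * norm (c - ck))) \<le> t * \<mu> (c - ck)"
  proof -
    have "- (norm \<mu> * norm (c - ck)) \<le> \<mu> (c - ck)"
      using abs_blinfun_le[of \<mu> "c - ck"] by linarith
    from mult_left_mono[OF this assms(1)] show ?thesis by simp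
  qed
  moreover have "- (t * B) \<le> t * \<mu> ck"
    using mult_left_mono[OF assms(4) assms(1)] by simp
  moreover have "0 \<le> t * \<mu> z"
    using assms(1,2) by simp
  ultimately have "- (B * norm d) - norm \<mu> * (norm (A - Ak) * norm d) - t * B
      - t * (norm \<mu> * norm (c - ck))
      \<le> (\<mu> o\<^sub>L Ak) d + \<mu> ((A - Ak) d) + t * \<mu> z + t * \<mu> ck + t * \<mu> (c - ck)"
    by (simp add: abs_le_iff)
  also have "\<dots> = \<mu> (A d + t *\<^sub>R (z + c))"
    by (simp add: blinfun.bilinear_simps algebra_simps)
  finally have "- (B * norm d) - norm \<mu> * (norm (A - Ak) * norm d) - t * B
      - t * (norm \<mu> * norm (c - ck)) \<le> \<mu> (A d + t *\<^sub>R (z + c))" .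
  moreover have "(norm d + t) * (B + (norm (A - Ak) + norm (c - ck)) * norm \<mu>)
      = B * norm d + norm \<mu> * (norm (A - Ak) * norm d) + t * B + t * (norm \<mu> * norm (c - ck))
        + (norm d * (norm \<mu> * norm (c - ck)) + t * (norm \<mu> * norm (A - Ak)))"
    by (simp add: algebra_simps)
  moreover have "0 \<le> norm d * (norm \<mu> * norm (c - ck)) + t * (norm \<mu> * norm (A - Ak))"
    using assms(1) by simp
  ultimately show ?thesis by linarith
qed

lemma norm_multipliers_le_if_Zowe_Kurcyusz:
  fixes A :: "'x::real_normed_vector \<Rightarrow>\<^sub>L 'y::banach"
    and Ak :: "'i \<Rightarrow> 'x \<Rightarrow>\<^sub>L 'y"
    and lam :: "'i \<Rightarrow> 'y \<Rightarrow>\<^sub>L real"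
  assumes ZK: "range (blinfun_apply A) + conical_hull (K + {c}) = UNIV"
    and lam_nonneg: "\<And>k y. y \<in> K \<Longrightarrow> 0 \<le> lam k y"
    and "0 < B"
    and comp_le: "\<And>k. norm (lam k o\<^sub>L Ak k) \<le> B"
    and ck_ge: "\<And>k. - B \<le> lam k (ck k)"
  obtains N where "\<And>k. norm (lam k) \<le> N * (B + (norm (A - Ak k) + norm (c - ck k)) * norm (lam k))"
proof -
  define D where "D k = B + (norm (A - Ak k) + norm (c - ck k)) * norm (lam k)" for k
  have D_pos: "D k > 0" for k
    using \<open>0 < B\<close> by (simp add: D_def add_pos_nonneg)
  \<comment> \<open>Dividing by \<open>D k\<close> makes the lower bound on each decomposition independent of \<open>k\<close>.\<close>
  define \<nu> where "\<nu> k = (1 / D k) *\<^sub>R lam k" for k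
  have "bdd_below (range (\<lambda>k. \<nu> k y))" for y
  proof -
    have "y \<in> range (blinfun_apply A) + conical_hull (K + {c})"
      using ZK by simp
    then obtain d t z where "0 \<le> t" "z \<in> K" and y: "y = A d + t *\<^sub>R (z + c)"
      by (auto simp: conical_hull_def elim!: set_plus_elim)
    have "- (norm d + t) \<le> \<nu> k y" for k
    proof -
      have "- (norm d + t) = - ((norm d + t) * D k) / D k"
        using D_pos[of k] by simp
      also have "\<dots> \<le> lam k y / D k"
      proof (rule divide_right_mono)
        show "- ((norm d + t) * D k) \<le> lam k y"
          unfolding y D_def
          by (rule multiplier_lower_bound_on_cone_decomposition[OF \<open>0 \<le> t\<close>
                lam_nonneg[OF \<open>z \<in> K\<close>] comp_le ck_ge])
      qed (use D_pos[of k] in simp)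
      also have "\<dots> = \<nu> k y"
        by (simp add: \<nu>_def blinfun.scaleR_left)
      finally show ?thesis .
    qed
    then show ?thesis by (meson bdd_belowI2)
  qed
  then obtain N where N: "\<And>k. norm (\<nu> k) \<le> N"
    using bounded_range_blinfun_if_pointwise_bdd_below by (metis bounded_iff rangeI)
  have "norm (lam k) \<le> N * D k" for k
  proof -
    have "norm (lam k) = D k * norm (\<nu> k)"
      using D_pos[of k] by (simp add: \<nu>_def abs_of_pos)
    also have "\<dots> \<le> D k * N"
      using N[of k] D_pos[of k] by (intro mult_left_mono) auto
    finally show ?thesis by (simp add: mult.commute)
  qed
  then show thesis
    by (intro that) (simp add: D_def)
qed

lemma bounded_multipliers_if_Zowe_Kurcyusz:
  fixes A :: "'x::real_normed_vector \<Rightarrow>\<^sub>L 'y::banach"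
    and Ak :: "nat \<Rightarrow> 'x \<Rightarrow>\<^sub>L 'y"
    and lam :: "nat \<Rightarrow> 'y \<Rightarrow>\<^sub>L real"
  assumes ZK: "range (blinfun_apply A) + conical_hull (K + {c}) = UNIV"
    and lam_nonneg: "\<And>k y. y \<in> K \<Longrightarrow> 0 \<le> lam k y"
    and Ak_lim: "Ak \<longlonglongrightarrow> A"
    and ck_lim: "ck \<longlonglongrightarrow> c"
    and comp_bounded: "bounded (range (\<lambda>k. lam k o\<^sub>L Ak k))"
    and ck_bdd_below: "bdd_below (range (\<lambda>k. lam k (ck k)))"
  shows "bounded (range lam)"
proof -
  obtain B1 where "0 < B1" and B1: "\<And>k. norm (lam k o\<^sub>L Ak k) \<le> B1"
    using comp_bounded by (auto simp: bounded_pos)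
  obtain B2 where B2: "\<And>k. B2 \<le> lam k (ck k)"
    using ck_bdd_below by (meson bdd_below.E rangeI)
  define B where "B = B1 + \<bar>B2\<bar>"
  have bounds: "0 < B" "\<And>k. norm (lam k o\<^sub>L Ak k) \<le> B" "\<And>k. - B \<le> lam k (ck k)"
    using \<open>0 < B1\<close> B1 B2 abs_ge_minus_self[of B2] unfolding B_def by (smt (verit))+
  obtain N
    where N: "\<And>k. norm (lam k) \<le> N * (B + (norm (A - Ak k) + norm (c - ck k)) * norm (lam k))"
    using norm_multipliers_le_if_Zowe_Kurcyusz[where Ak = Ak and ck = ck, OF ZK lam_nonneg bounds]
    by blast
  have "(\<lambda>k. norm (A - Ak k) + norm (c - ck k)) \<longlonglongrightarrow> 0"
    using tendsto_diff[OF tendsto_const Ak_lim, of A] tendsto_diff[OF tendsto_const ck_lim, of c]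
    by (intro tendsto_add_zero tendsto_norm_zero) simp_all
  moreover have "norm (lam k) \<le> N * B + N * (norm (A - Ak k) + norm (c - ck k)) * norm (lam k)"
    for k
    using N[of k] by (simp add: algebra_simps)
  ultimately have "Bseq (\<lambda>k. norm (lam k))"
    by (intro Bseq_if_le_const_plus_vanishing_multiple
        [where \<epsilon> = "\<lambda>k. N * (norm (A - Ak k) + norm (c - ck k))"])
      (auto intro: tendsto_mult_right_zero)
  then show ?thesis
    by (simp add: Bseq_eq_bounded bounded_norm_comp image_image)
qed

lemma bounded_AKKT_multipliers_if_Zowe_Kurcyusz:
  fixes F :: "'x::real_normed_vector \<Rightarrow>\<^sub>L real"
    and A :: "'x \<Rightarrow>\<^sub>L 'y::banach"
    and lam :: "nat \<Rightarrow> 'y \<Rightarrow>\<^sub>L real"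
  assumes ZK: "range (blinfun_apply A) + conical_hull (K + {c}) = UNIV"
    and lam_nonneg: "\<And>k y. y \<in> K \<Longrightarrow> 0 \<le> lam k y"
    and Fk_lim: "Fk \<longlonglongrightarrow> F"
    and Ak_lim: "Ak \<longlonglongrightarrow> A"
    and ck_lim: "ck \<longlonglongrightarrow> c"
    and stationary: "(\<lambda>k. Fk k + (lam k o\<^sub>L Ak k)) \<longlonglongrightarrow> 0"
    and slack: "\<And>k. ck k + sk k \<in> K"
    and complementary: "(\<lambda>k. lam k (sk k)) \<longlonglongrightarrow> 0"
  shows "bounded (range lam)"
proof (rule bounded_multipliers_if_Zowe_Kurcyusz[OF ZK lam_nonneg Ak_lim ck_lim])
  have "(\<lambda>k. lam k o\<^sub>L Ak k) \<longlonglongrightarrow> 0 - F"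
    using tendsto_diff[OF stationary Fk_lim] by simp
  then show "bounded (range (\<lambda>k. lam k o\<^sub>L Ak k))"
    by (rule convergent_imp_bounded)
  obtain B where B: "\<And>k. \<bar>lam k (sk k)\<bar> \<le> B"
    using convergent_imp_bounded[OF complementary] by (auto simp: bounded_iff)
  have "- B \<le> lam k (ck k)" for k
  proof -
    have "0 \<le> lam k (ck k) + lam k (sk k)"
      using lam_nonneg[OF slack[of k]] by (simp add: blinfun.add_right)
    then show ?thesis using B[of k] by linarith
  qed
  then show "bdd_below (range (\<lambda>k. lam k (ck k)))"
    by (meson bdd_belowI2)
qed

lemma weakstar_convergent_subseq:
  fixes lam :: "nat \<Rightarrow> 'y::real_normed_vector \<Rightarrow>\<^sub>L real"
  assumes compact: "dual_ball_weakstar_seq_compact TYPE('y \<Rightarrow>\<^sub>L real)"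
    and bounded: "bounded (range lam)"
  obtains r and \<mu> :: "'y \<Rightarrow>\<^sub>L real" where "strict_mono r" "\<And>y. (\<lambda>n. lam (r n) y) \<longlonglongrightarrow> \<mu> y"
proof -
  obtain R where "0 < R" and R: "\<And>k. norm (lam k) \<le> R"
    using bounded by (auto simp: bounded_pos)
  have "norm ((1 / R) *\<^sub>R lam k) \<le> 1" for k
    using R[of k] \<open>0 < R\<close> by simp
  then obtain r and \<mu> :: "'y \<Rightarrow>\<^sub>L real" where "strict_mono r"
    and lim: "\<And>y. (\<lambda>n. ((1 / R) *\<^sub>R lam (r n)) y) \<longlonglongrightarrow> \<mu> y"
    using compact unfolding dual_ball_weakstar_seq_compact_def
    by (elim allE[of _ "\<lambda>k. (1 / R) *\<^sub>R lam k"]) auto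
  have "(\<lambda>n. lam (r n) y) \<longlonglongrightarrow> (R *\<^sub>R \<mu>) y" for y
    using tendsto_mult_left[OF lim[of y], of R] \<open>0 < R\<close> by (simp add: blinfun.scaleR_left)
  with \<open>strict_mono r\<close> show thesis by (rule that)
qed

lemma weakstar_tendsto_apply_tendsto:
  fixes lam :: "nat \<Rightarrow> 'y::real_normed_vector \<Rightarrow>\<^sub>L real" and \<mu> :: "'y \<Rightarrow>\<^sub>L real"
  assumes weakstar: "\<And>y. (\<lambda>n. lam n y) \<longlonglongrightarrow> \<mu> y"
    and bounded: "bounded (range lam)"
    and yn_lim: "yn \<longlonglongrightarrow> y"
  shows "(\<lambda>n. lam n (yn n)) \<longlonglongrightarrow> \<mu> y"
proof -
  obtain R where R: "\<And>n. norm (lam n) \<le> R"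
    using bounded by (auto simp: bounded_iff)
  have "(\<lambda>n. lam n (yn n - y)) \<longlonglongrightarrow> 0"
  proof (rule Lim_null_comparison)
    show "\<forall>\<^sub>F n in sequentially. norm (lam n (yn n - y)) \<le> R * norm (yn n - y)"
    proof (intro always_eventually allI)
      fix n
      have "norm (lam n (yn n - y)) \<le> norm (lam n) * norm (yn n - y)"
        by (rule norm_blinfun)
      also have "\<dots> \<le> R * norm (yn n - y)"
        by (intro mult_right_mono R) simp
      finally show "norm (lam n (yn n - y)) \<le> R * norm (yn n - y)" .
    qed
    show "(\<lambda>n. R * norm (yn n - y)) \<longlonglongrightarrow> 0"
      using yn_lim by (intro tendsto_mult_right_zero tendsto_norm_zero) (simp add: LIM_zero)
  qed
  then have "(\<lambda>n. lam n y + lam n (yn n - y)) \<longlonglongrightarrow> \<mu> y + 0"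
    by (intro tendsto_add weakstar)
  then show ?thesis by (simp add: blinfun.diff_right)
qed

lemma KKT_multiplier_if_bounded_AKKT:
  fixes F :: "'x::real_normed_vector \<Rightarrow>\<^sub>L real"
    and A :: "'x \<Rightarrow>\<^sub>L 'y::real_normed_vector"
    and lam :: "nat \<Rightarrow> 'y \<Rightarrow>\<^sub>L real"
  assumes compact: "dual_ball_weakstar_seq_compact TYPE('y \<Rightarrow>\<^sub>L real)"
    and lam_bounded: "bounded (range lam)"
    and lam_nonneg: "\<And>k y. y \<in> K \<Longrightarrow> 0 \<le> lam k y"
    and Fk_lim: "Fk \<longlonglongrightarrow> F"
    and Ak_lim: "Ak \<longlonglongrightarrow> A"
    and ck_lim: "ck \<longlonglongrightarrow> c"
    and stationary: "(\<lambda>k. Fk k + (lam k o\<^sub>L Ak k)) \<longlonglongrightarrow> 0"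
    and slack: "\<And>k. ck k + sk k \<in> K"
    and complementary: "(\<lambda>k. lam k (sk k)) \<longlonglongrightarrow> 0"
    and feasible: "- c \<in> K"
  obtains \<mu> :: "'y \<Rightarrow>\<^sub>L real" where "\<And>y. y \<in> K \<Longrightarrow> 0 \<le> \<mu> y" "F + (\<mu> o\<^sub>L A) = 0" "\<mu> c = 0"
proof -
  obtain r and \<mu> :: "'y \<Rightarrow>\<^sub>L real" where r: "strict_mono r" and weakstar: "\<And>y. (\<lambda>n. lam (r n) y) \<longlonglongrightarrow> \<mu> y"
    using weakstar_convergent_subseq[OF compact lam_bounded] by blast
  have sub_bounded: "bounded (range (\<lambda>n. lam (r n)))"
    using lam_bounded by (rule bounded_subset) auto
  have subseq: "(\<lambda>n. X (r n)) \<longlonglongrightarrow> L" if "X \<longlonglongrightarrow> L" for X :: "nat \<Rightarrow> 'b::topological_space" and L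
    using LIMSEQ_subseq_LIMSEQ[OF that r] by (simp add: o_def)
  note apply_lim = weakstar_tendsto_apply_tendsto[OF weakstar sub_bounded]
  have \<mu>_nonneg: "0 \<le> \<mu> y" if "y \<in> K" for y
    using lam_nonneg[OF that] by (intro LIMSEQ_le_const[OF weakstar]) auto
  have "F d + \<mu> (A d) = 0" for d
  proof -
    have lim0: "(\<lambda>n. (Fk (r n) + (lam (r n) o\<^sub>L Ak (r n))) d) \<longlonglongrightarrow> 0"
      using blinfun.tendsto[OF subseq[OF stationary] tendsto_const[of d]] by simp
    have "(\<lambda>n. Fk (r n) d) \<longlonglongrightarrow> F d" "(\<lambda>n. Ak (r n) d) \<longlonglongrightarrow> A d"
      using blinfun.tendsto[OF subseq[OF Fk_lim] tendsto_const[of d]]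
        blinfun.tendsto[OF subseq[OF Ak_lim] tendsto_const[of d]] by simp_all
    then have "(\<lambda>n. (Fk (r n) + (lam (r n) o\<^sub>L Ak (r n))) d) \<longlonglongrightarrow> F d + \<mu> (A d)"
      unfolding blinfun.add_left blinfun_apply_blinfun_compose
      by (intro tendsto_add apply_lim)
    from this lim0 show ?thesis by (rule LIMSEQ_unique)
  qed
  then have "F + (\<mu> o\<^sub>L A) = 0"
    by (intro blinfun_eqI) (simp add: blinfun.add_left)
  moreover have "0 \<le> \<mu> c"
  proof -
    have "(\<lambda>n. lam (r n) (ck (r n)) + lam (r n) (sk (r n))) \<longlonglongrightarrow> \<mu> c + 0"
      using subseq[OF complementary] by (intro tendsto_add apply_lim subseq[OF ck_lim])
    moreover have "0 \<le> lam (r n) (ck (r n)) + lam (r n) (sk (r n))" for n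
      using lam_nonneg[OF slack[of "r n"]] by (simp add: blinfun.add_right)
    ultimately show ?thesis
      using LIMSEQ_le_const by fastforce
  qed
  moreover have "\<mu> c \<le> 0"
    using \<mu>_nonneg[OF feasible] by (simp add: blinfun.minus_right)
  ultimately show thesis
    using \<mu>_nonneg by (intro that[of \<mu>]) auto
qed

lemma KY_add_negative_part:
  assumes "L2_dense_embedding M e"
    and "AE w in M. e s w = max (- e y w) 0"
  shows "y + s \<in> KY M e"
proof -
  have "AE w in M. e (1 *\<^sub>R y + 1 *\<^sub>R s) w = 1 * e y w + 1 * e s w"
    using assms(1) unfolding L2_dense_embedding_def by (elim conjE allE)
  with assms(2) have "AE w in M. 0 \<le> e (y + s) w"
    by eventually_elim auto
  then show ?thesis by (simp add: KY_def)
qed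

theorem theorem5p5:
  fixes M :: "'w measure"
    and e :: "'y::banach \<Rightarrow> 'w \<Rightarrow> real"
    and f :: "'x::banach \<Rightarrow> real"
    and f' :: "'x \<Rightarrow> ('x \<Rightarrow>\<^sub>L real)"
    and g :: "'x \<Rightarrow> 'y"
    and g' :: "'x \<Rightarrow> ('x \<Rightarrow>\<^sub>L 'y)"
    and x :: 'x
    and xk :: "nat \<Rightarrow> 'x"
    and lam :: "nat \<Rightarrow> ('y \<Rightarrow>\<^sub>L real)"
    and gm :: "nat \<Rightarrow> 'y"
  assumes emb: "L2_dense_embedding M e"
    and f_diff: "\<And>z. (f has_derivative blinfun_apply (f' z)) (at z)"
    and f'_cont: "continuous_on UNIV f'"
    and g_diff: "\<And>z. (g has_derivative blinfun_apply (g' z)) (at z)"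
    and g'_cont: "continuous_on UNIV g'"
    and feasible: "Yle0 M e (g x)"
    and xk_lim: "xk \<longlonglongrightarrow> x"
    and lam_pos: "\<And>k. lam k \<in> KY_plus M e"
    and stat: "(\<lambda>k. f' (xk k) + (lam k o\<^sub>L g' (xk k))) \<longlonglongrightarrow> 0"
    and gm_def: "\<And>k. AE w in M. e (gm k) w = max (- e (g (xk k)) w) 0"
    and compl: "(\<lambda>k. blinfun_apply (lam k) (gm k)) \<longlonglongrightarrow> 0"
  shows "((range (blinfun_apply (g' x)) + conical_hull (KY M e + {g x}) = UNIV)
            \<longrightarrow> bounded (range lam))
       \<and> (((\<exists>a :: 'y \<Rightarrow> 'y. (\<forall>y. AE w in M. e (a y) w = \<bar>e y w\<bar>) \<and> continuous_on UNIV a)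
            \<and> dual_ball_weakstar_seq_compact TYPE('y \<Rightarrow>\<^sub>L real)
            \<and> bounded (range lam))
          \<longrightarrow> (\<exists>\<mu> \<in> KY_plus M e. f' x + (\<mu> o\<^sub>L g' x) = 0 \<and> Yle0 M e (g x)
                 \<and> blinfun_apply \<mu> (g x) = 0))"
proof -
  have lam_nonneg: "\<And>k y. y \<in> KY M e \<Longrightarrow> 0 \<le> lam k y"
    using lam_pos by (auto simp: KY_plus_def)
  have slack: "g (xk k) + gm k \<in> KY M e" for k
    by (rule KY_add_negative_part[OF emb gm_def])
  have gxk: "(\<lambda>k. g (xk k)) \<longlonglongrightarrow> g x"
    using g_diff has_derivative_continuous xk_lim isCont_tendsto_compose by blast
  have g'xk: "(\<lambda>k. g' (xk k)) \<longlonglongrightarrow> g' x" and f'xk: "(\<lambda>k. f' (xk k)) \<longlonglongrightarrow> f' x"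
    using g'_cont f'_cont xk_lim by (auto intro: continuous_on_tendsto_compose)
  have neg_gx: "- g x \<in> KY M e"
    using feasible by (simp add: Yle0_def)
  show ?thesis
  proof (intro conjI impI)
    assume "range (blinfun_apply (g' x)) + conical_hull (KY M e + {g x}) = UNIV"
    then show "bounded (range lam)"
      by (rule bounded_AKKT_multipliers_if_Zowe_Kurcyusz[OF _ lam_nonneg f'xk g'xk gxk stat
            slack compl])
  next
    \<comment> \<open>The continuity of \<open>y \<mapsto> |y|\<close> only serves to make \<open>g\<^sub>-(x\<^sup>k)\<close> an element of \<open>Y\<close>;
      here that element is given as \<open>gm k\<close>.\<close>
    assume "(\<exists>a :: 'y \<Rightarrow> 'y. (\<forall>y. AE w in M. e (a y) w = \<bar>e y w\<bar>) \<and> continuous_on UNIV a)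
            \<and> dual_ball_weakstar_seq_compact TYPE('y \<Rightarrow>\<^sub>L real) \<and> bounded (range lam)"
    then obtain \<mu> :: "'y \<Rightarrow>\<^sub>L real" where "\<And>y. y \<in> KY M e \<Longrightarrow> 0 \<le> \<mu> y"
      and "f' x + (\<mu> o\<^sub>L g' x) = 0" "\<mu> (g x) = 0"
      using KKT_multiplier_if_bounded_AKKT[OF _ _ lam_nonneg f'xk g'xk gxk stat slack compl neg_gx]
      by blast
    then show "\<exists>\<mu> \<in> KY_plus M e. f' x + (\<mu> o\<^sub>L g' x) = 0 \<and> Yle0 M e (g x)
                 \<and> blinfun_apply \<mu> (g x) = 0"
      using feasible by (auto simp: KY_plus_def)
  qed
qed

end
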